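(* For $n=2$, $DCell_1$ is Hamiltonian but not Hamiltonian-connected. The same holds for every Generalized $DCell_1$ with $n=2$.
   Context: $DCell_0$ is the complete graph $K_n$ ($t_0=n$ vertices). $DCell_1$ consists of $t_0+1$ vertex-disjoint copies $D_0^0,\dots,D_0^{t_0}$ of $K_n$, with vertices of each copy numbered $0,\dots,n-1$, and for each pair $a<b$ the vertex numbered $b-1$ of $D_0^a$ is joined to the vertex numbered $a$ of $D_0^b$. A Generalized $DCell_1$ uses instead any set of edges between the copies such that each pair of distinct copies is joined by exactly one edge and each vertex is incident with exactly one such edge. A graph is Hamiltonian-connected if every two distinct vertices are the endpoints of a Hamiltonian path. *)

theory Defs
  imports Main
begin

(* Simple graphs: vertex set V, edge set E of 2-element sets {u,v}. *)

definition ham_path :: "'a set \<Rightarrow> 'a set set \<Rightarrow> 'a list \<Rightarrow> bool" where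
  "ham_path V E p \<longleftrightarrow> distinct p \<and> set p = V \<and>
     (\<forall>i. Suc i < length p \<longrightarrow> {p ! i, p ! Suc i} \<in> E)"

(* Hamiltonian: has a Hamiltonian cycle (a cycle has at least 3 vertices) *)
definition hamiltonian :: "'a set \<Rightarrow> 'a set set \<Rightarrow> bool" where
  "hamiltonian V E \<longleftrightarrow> (\<exists>p. ham_path V E p \<and> 3 \<le> length p \<and> {last p, hd p} \<in> E)"

definition ham_connected :: "'a set \<Rightarrow> 'a set set \<Rightarrow> bool" where
  "ham_connected V E \<longleftrightarrow>
     (\<forall>u\<in>V. \<forall>v\<in>V. u \<noteq> v \<longrightarrow> (\<exists>p. ham_path V E p \<and> hd p = u \<and> last p = v))"

(* DCell_1 built from t_0 + 1 = n + 1 copies of K_n; vertex (a,i) = vertex i of copy D_0^a *)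
definition dcell1_V :: "nat \<Rightarrow> (nat \<times> nat) set" where
  "dcell1_V n = {(a, i). a \<le> n \<and> i < n}"

definition dcell1_intra :: "nat \<Rightarrow> (nat \<times> nat) set set" where
  "dcell1_intra n = {{(a, i), (a, j)} | a i j. a \<le> n \<and> i < n \<and> j < n \<and> i \<noteq> j}"

definition dcell1_cross :: "nat \<Rightarrow> (nat \<times> nat) set set" where
  "dcell1_cross n = {{(a, b - 1), (b, a)} | a b. a < b \<and> b \<le> n}"

definition dcell1_E :: "nat \<Rightarrow> (nat \<times> nat) set set" where
  "dcell1_E n = dcell1_intra n \<union> dcell1_cross n"

definition gen_dcell1_cross :: "nat \<Rightarrow> (nat \<times> nat) set set \<Rightarrow> bool" where
  "gen_dcell1_cross n X \<longleftrightarrow>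
     X \<subseteq> {{u, v} | u v. u \<in> dcell1_V n \<and> v \<in> dcell1_V n \<and> fst u \<noteq> fst v} \<and>
     (\<forall>a b. a \<le> n \<and> b \<le> n \<and> a \<noteq> b \<longrightarrow>
        (\<exists>!e. e \<in> X \<and> (\<exists>u v. e = {u, v} \<and> fst u = a \<and> fst v = b))) \<and>
     (\<forall>v\<in>dcell1_V n. \<exists>!e. e \<in> X \<and> v \<in> e)"

end

theory Submission
  imports Defs
begin

text \<open>For \<open>n = 2\<close> there are three copies of \<open>K\<^sub>2\<close>, each pair of copies is joined by one
  edge, and these inter-copy edges form a perfect matching. So every generalized \<open>DCell\<^sub>1\<close>
  with \<open>n = 2\<close> is a hexagon, alternating between intra-copy and inter-copy edges: it is
  Hamiltonian, but no Hamiltonian path joins the two neighbours of a vertex, because that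
  vertex of degree two would have to lie strictly between them, leaving no room for the other
  three vertices. The standard \<open>DCell\<^sub>1\<close> is one particular generalized \<open>DCell\<^sub>1\<close>.\<close>

lemma hamiltonian_hexagon:
  assumes "distinct [a, b, c, d, e, f]" "V = {a, b, c, d, e, f}"
    and "{a, b} \<in> E" "{b, c} \<in> E" "{c, d} \<in> E" "{d, e} \<in> E" "{e, f} \<in> E" "{f, a} \<in> E"
  shows "hamiltonian V E"
  unfolding hamiltonian_def ham_path_def
proof (intro exI[of _ "[a, b, c, d, e, f]"] conjI allI impI)
  fix i assume "Suc i < length [a, b, c, d, e, f]"
  then have "i = 0 \<or> i = 1 \<or> i = 2 \<or> i = 3 \<or> i = 4" by auto
  then show "{[a, b, c, d, e, f] ! i, [a, b, c, d, e, f] ! Suc i} \<in> E"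
    using assms(3-7) by (elim disjE) simp_all
qed (use assms in simp_all)

lemma not_ham_connected_if_degree_two:
  assumes "a \<in> V" "b \<in> V" "c \<in> V" "a \<noteq> b" "b \<noteq> c" "a \<noteq> c" "3 < card V"
    and nbrs: "\<And>x. {x, b} \<in> E \<Longrightarrow> x \<noteq> b \<Longrightarrow> x = a \<or> x = c"
  shows "\<not> ham_connected V E"
proof
  assume "ham_connected V E"
  then obtain p where p: "ham_path V E p" "hd p = a" "last p = c"
    using assms unfolding ham_connected_def by blast
  then have dist: "distinct p" and set: "set p = V"
    and edge: "\<And>i. Suc i < length p \<Longrightarrow> {p ! i, p ! Suc i} \<in> E"
    unfolding ham_path_def by auto
  then have len: "length p = card V" using distinct_card by fastforce
  with assms have pos: "0 < length p" by auto
  with p have first: "p ! 0 = a" and last: "p ! (length p - 1) = c"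
    by (simp_all add: hd_conv_nth last_conv_nth)
  have idx: "p ! i = p ! j \<longleftrightarrow> i = j" if "i < length p" "j < length p" for i j
    using dist that by (simp add: nth_eq_iff_index_eq)
  obtain k where k: "k < length p" "p ! k = b"
    using set assms(2) by (metis in_set_conv_nth)
  have ends: "i = 0 \<or> i = length p - 1" if "i < length p" "i \<noteq> k" "{p ! i, b} \<in> E" for i
  proof -
    have "p ! i = a \<or> p ! i = c"
      using nbrs[OF that(3)] idx[of i k] that k by auto
    then have "p ! i = p ! 0 \<or> p ! i = p ! (length p - 1)"
      using first last by simp
    then show ?thesis using that(1) pos by (metis idx diff_less zero_less_one)
  qed
  have "k \<noteq> 0" using first k assms(4) by (cases "k = 0") auto
  moreover have "k \<noteq> length p - 1" using last k assms(5) by auto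
  ultimately have inner: "0 < k" "k + 1 < length p" using k by auto
  have "k - 1 = 0 \<or> k - 1 = length p - 1"
    by (rule ends) (use edge[of "k - 1"] k inner in auto)
  moreover have "k + 1 = 0 \<or> k + 1 = length p - 1"
    by (rule ends) (use edge[of k] k inner in \<open>auto simp: insert_commute\<close>)
  ultimately have "k - 1 = 0" and "k + 1 = length p - 1" using inner by auto
  with len \<open>3 < card V\<close> show False by linarith
qed

lemma dcell1_cross_iff:
  "e \<in> dcell1_cross n \<longleftrightarrow> (\<exists>a b. a < b \<and> b \<le> n \<and> e = {(a, b - 1), (b, a)})"
  unfolding dcell1_cross_def by blast

lemma dcell1_cross_memI: "a < b \<Longrightarrow> b \<le> n \<Longrightarrow> {(a, b - 1), (b, a)} \<in> dcell1_cross n"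
  by (auto simp: dcell1_cross_iff)

lemma dcell1_cross_between:
  assumes "a \<le> n" "b \<le> n" "a \<noteq> b"
  shows "\<exists>!e. e \<in> dcell1_cross n \<and> (\<exists>u v. e = {u, v} \<and> fst u = a \<and> fst v = b)"
proof (rule ex1I)
  let ?lo = "min a b" and ?hi = "max a b"
  let ?e = "{(?lo, ?hi - 1), (?hi, ?lo)}"
  have "?e \<in> dcell1_cross n"
    by (rule dcell1_cross_memI) (use assms in auto)
  moreover have "\<exists>u v. ?e = {u, v} \<and> fst u = a \<and> fst v = b"
  proof (cases "a < b")
    case True
    then show ?thesis by (intro exI[of _ "(a, b - 1)"] exI[of _ "(b, a)"]) simp
  next
    case False
    then show ?thesis using assms(3)
      by (intro exI[of _ "(a, b)"] exI[of _ "(b, a - 1)"]) (simp add: insert_commute)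
  qed
  ultimately show "?e \<in> dcell1_cross n \<and> (\<exists>u v. ?e = {u, v} \<and> fst u = a \<and> fst v = b)" ..
  fix e assume "e \<in> dcell1_cross n \<and> (\<exists>u v. e = {u, v} \<and> fst u = a \<and> fst v = b)"
  then obtain a' b' u v where e: "a' < b'" "e = {(a', b' - 1), (b', a')}" "e = {u, v}"
    "fst u = a" "fst v = b"
    by (auto simp: dcell1_cross_iff)
  then have "fst ` {u, v} = fst ` {(a', b' - 1), (b', a')}" by simp
  then have "{a, b} = {a', b'}" using e(4,5) by simp
  with \<open>a' < b'\<close> have "a' = ?lo" "b' = ?hi" by (auto simp: doubleton_eq_iff)
  with e show "e = ?e" by simp
qed

lemma dcell1_cross_at_vertex:
  assumes "x \<in> dcell1_V n"
  shows "\<exists>!e. e \<in> dcell1_cross n \<and> x \<in> e"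
proof -
  obtain a i where x: "x = (a, i)" "a \<le> n" "i < n" using assms by (auto simp: dcell1_V_def)
  let ?e = "if i < a then {(i, a - 1), (a, i)} else {(a, i), (i + 1, a)}"
  show ?thesis
  proof (rule ex1I)
    show "?e \<in> dcell1_cross n \<and> x \<in> ?e"
    proof (cases "i < a")
      case True
      then show ?thesis using x dcell1_cross_memI[of i a n] by simp
    next
      case False
      then show ?thesis using x dcell1_cross_memI[of a "i + 1" n] by simp
    qed
    fix e assume "e \<in> dcell1_cross n \<and> x \<in> e"
    then obtain a' b' where e: "a' < b'" "e = {(a', b' - 1), (b', a')}" "x \<in> e"
      by (auto simp: dcell1_cross_iff)
    then consider "(a, i) = (a', b' - 1)" | "(a, i) = (b', a')" using x(1) by blast
    then show "e = ?e"
    proof cases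
      case 1
      then have "a' = a" "b' = i + 1" "\<not> i < a" using \<open>a' < b'\<close> by auto
      then show ?thesis using e(2) by simp
    next
      case 2
      then have "b' = a" "a' = i" "i < a" using \<open>a' < b'\<close> by auto
      then show ?thesis using e(2) by simp
    qed
  qed
qed

lemma gen_dcell1_cross_dcell1_cross: "gen_dcell1_cross n (dcell1_cross n)"
  unfolding gen_dcell1_cross_def
proof (intro conjI allI impI ballI subsetI)
  fix e assume "e \<in> dcell1_cross n"
  then obtain a b where "a < b" "b \<le> n" "e = {(a, b - 1), (b, a)}"
    by (auto simp: dcell1_cross_iff)
  moreover have "(a, b - 1) \<in> dcell1_V n" "(b, a) \<in> dcell1_V n"
    using \<open>a < b\<close> \<open>b \<le> n\<close> by (auto simp: dcell1_V_def)
  ultimately show "e \<in> {{u, v} | u v. u \<in> dcell1_V n \<and> v \<in> dcell1_V n \<and> fst u \<noteq> fst v}"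
    by (intro CollectI exI[of _ "(a, b - 1)"] exI[of _ "(b, a)"]) simp
next
  fix a b assume "a \<le> n \<and> b \<le> n \<and> a \<noteq> b"
  then show "\<exists>!e. e \<in> dcell1_cross n \<and> (\<exists>u v. e = {u, v} \<and> fst u = a \<and> fst v = b)"
    by (intro dcell1_cross_between) simp_all
qed (rule dcell1_cross_at_vertex)

lemma dcell1_intra_iff:
  "{x, y} \<in> dcell1_intra n \<longleftrightarrow>
    fst x = fst y \<and> x \<in> dcell1_V n \<and> y \<in> dcell1_V n \<and> x \<noteq> y"
  unfolding dcell1_intra_def dcell1_V_def by (cases x; cases y) (auto simp: doubleton_eq_iff)

lemma dcell1_V_2_same_copy:
  assumes "x \<in> dcell1_V 2" "y \<in> dcell1_V 2" "z \<in> dcell1_V 2"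
    and "fst x = fst y" "fst z = fst x" "x \<noteq> y"
  shows "z = x \<or> z = y"
  using assms unfolding dcell1_V_def by (auto simp: prod_eq_iff)

lemma card_dcell1_V: "card (dcell1_V n) = (n + 1) * n"
proof -
  have "dcell1_V n = {..n} \<times> {..<n}" by (auto simp: dcell1_V_def)
  then show ?thesis by (simp add: card_cartesian_product)
qed

lemma gen_dcell1_cross_between:
  assumes "gen_dcell1_cross n X" "a \<le> n" "b \<le> n" "a \<noteq> b"
  obtains u v where "{u, v} \<in> X" "fst u = a" "fst v = b" "u \<in> dcell1_V n" "v \<in> dcell1_V n"
proof -
  have sub: "X \<subseteq> {{u, v} | u v. u \<in> dcell1_V n \<and> v \<in> dcell1_V n \<and> fst u \<noteq> fst v}"
    and "\<exists>!e. e \<in> X \<and> (\<exists>u v. e = {u, v} \<and> fst u = a \<and> fst v = b)"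
    using assms unfolding gen_dcell1_cross_def by simp_all
  then obtain u v where uv: "{u, v} \<in> X" "fst u = a" "fst v = b"
    by (metis ex1_implies_ex)
  obtain u' v' where "{u, v} = {u', v'}" "u' \<in> dcell1_V n" "v' \<in> dcell1_V n"
    using subsetD[OF sub uv(1)] by blast
  then have "u \<in> dcell1_V n" "v \<in> dcell1_V n" by (auto simp: doubleton_eq_iff)
  with uv show thesis by (rule that)
qed

lemma gen_dcell1_cross_unique:
  assumes "gen_dcell1_cross n X" "x \<in> dcell1_V n" "e \<in> X" "e' \<in> X" "x \<in> e" "x \<in> e'"
  shows "e = e'"
proof -
  have "\<exists>!e. e \<in> X \<and> x \<in> e" using assms(1,2) unfolding gen_dcell1_cross_def by simp
  then show ?thesis using assms(3-6) by blast
qed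

theorem gen_dcell1_2_hamiltonian_not_ham_connected:
  assumes X: "gen_dcell1_cross 2 X"
  shows "hamiltonian (dcell1_V 2) (dcell1_intra 2 \<union> X) \<and>
    \<not> ham_connected (dcell1_V 2) (dcell1_intra 2 \<union> X)"
proof -
  obtain a b where ab: "{a, b} \<in> X" "fst a = 0" "fst b = 1" "a \<in> dcell1_V 2" "b \<in> dcell1_V 2"
    by (rule gen_dcell1_cross_between[OF X, of 0 1]) simp_all
  obtain c d where cd: "{c, d} \<in> X" "fst c = 1" "fst d = 2" "c \<in> dcell1_V 2" "d \<in> dcell1_V 2"
    by (rule gen_dcell1_cross_between[OF X, of 1 2]) simp_all
  obtain e f where ef: "{e, f} \<in> X" "fst e = 2" "fst f = 0" "e \<in> dcell1_V 2" "f \<in> dcell1_V 2"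
    by (rule gen_dcell1_cross_between[OF X, of 2 0]) simp_all
  have bc: "b \<noteq> c"
    using gen_dcell1_cross_unique[OF X ab(5) ab(1) cd(1)] ab cd by (auto simp: doubleton_eq_iff)
  have de: "d \<noteq> e"
    using gen_dcell1_cross_unique[OF X cd(5) cd(1) ef(1)] cd ef by (auto simp: doubleton_eq_iff)
  have fa: "f \<noteq> a"
    using gen_dcell1_cross_unique[OF X ab(4) ab(1) ef(1)] ab ef by (auto simp: doubleton_eq_iff)
  have dist: "distinct [a, b, c, d, e, f]" using ab cd ef bc de fa by auto
  let ?E = "dcell1_intra 2 \<union> X"
  have V: "dcell1_V 2 = {a, b, c, d, e, f}"
  proof (intro equalityI subsetI)
    fix z assume z: "z \<in> dcell1_V 2"
    then consider "fst z = 0" | "fst z = 1" | "fst z = 2" by (force simp: dcell1_V_def)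
    then show "z \<in> {a, b, c, d, e, f}"
    proof cases
      case 1
      then show ?thesis using dcell1_V_2_same_copy[OF ab(4) ef(5) z] ab ef fa by auto
    next
      case 2
      then show ?thesis using dcell1_V_2_same_copy[OF ab(5) cd(4) z] ab cd bc by auto
    next
      case 3
      then show ?thesis using dcell1_V_2_same_copy[OF cd(5) ef(4) z] cd ef de by auto
    qed
  qed (use ab cd ef in auto)
  have "{b, c} \<in> dcell1_intra 2" using ab(3,5) cd(2,4) bc by (simp add: dcell1_intra_iff)
  moreover have "{d, e} \<in> dcell1_intra 2" using cd(3,5) ef(2,4) de by (simp add: dcell1_intra_iff)
  moreover have "{f, a} \<in> dcell1_intra 2" using ab(2,4) ef(3,5) fa by (simp add: dcell1_intra_iff)
  ultimately have "hamiltonian (dcell1_V 2) ?E"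
    by (intro hamiltonian_hexagon[OF dist V]) (simp_all add: ab(1) cd(1) ef(1))
  moreover have "\<not> ham_connected (dcell1_V 2) ?E"
  proof (rule not_ham_connected_if_degree_two[of a _ b c])
    fix x assume x: "{x, b} \<in> ?E" "x \<noteq> b"
    show "x = a \<or> x = c"
    proof (cases "{x, b} \<in> X")
      case True
      then have "{x, b} = {a, b}" using gen_dcell1_cross_unique[OF X ab(5) _ ab(1)] by simp
      then show ?thesis using x(2) by (auto simp: doubleton_eq_iff)
    next
      case False
      with x have "fst x = fst b" "x \<in> dcell1_V 2" by (auto simp: dcell1_intra_iff)
      then have "x = b \<or> x = c"
        using dcell1_V_2_same_copy[OF ab(5) cd(4) \<open>x \<in> dcell1_V 2\<close>] ab(3) cd(2) bc by simp
      with x(2) show ?thesis by simp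
    qed
  qed (use ab cd dist in \<open>auto simp: card_dcell1_V\<close>)
  ultimately show ?thesis ..
qed

theorem lemma2:
  shows "hamiltonian (dcell1_V 2) (dcell1_E 2) \<and> \<not> ham_connected (dcell1_V 2) (dcell1_E 2)
    \<and> (\<forall>X. gen_dcell1_cross 2 X \<longrightarrow>
          hamiltonian (dcell1_V 2) (dcell1_intra 2 \<union> X) \<and>
          \<not> ham_connected (dcell1_V 2) (dcell1_intra 2 \<union> X))"
  using gen_dcell1_2_hamiltonian_not_ham_connected[OF gen_dcell1_cross_dcell1_cross]
    gen_dcell1_2_hamiltonian_not_ham_connected
  unfolding dcell1_E_def by blast

end
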